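(* Let $d\ge 2$ and $r=r_c=\sqrt{2}$. Consider random sequential adsorption on $S^{d-1}$ with parameter $r$, as defined in the context. Then with probability $1$ the process terminates, and the final (complete) parking consists of exactly $d+1$ points.
   Context: Let $d\ge 2$ and let $S^{d-1}=\{x\in\mathbb{R}^d:|x|=1\}$ be the unit sphere centred at the origin, with $|\cdot|$ the Euclidean norm on $\mathbb{R}^d$. For $r>0$, a parking of radius $r$ on $S^{d-1}$ is a finite set of points $x_1,\dots,x_n\in S^{d-1}$ such that $|x_i-x_j|\ge r$ for all $i\ne j$. Note that $|x_i-x_j|\ge r$ is equivalent to $x_i\cdot x_j\le 1-\tfrac12 r^2$; in particular, for $r=\sqrt2$ it is equivalent to $x_i\cdot x_j\le 0$. Random sequential adsorption with parameter $r$ is the following random process. Start with the empty set. Given the currently parked points $x_1,\dots,x_n$, let $A_n=\{x\in S^{d-1}: |x-x_i|\ge r \text{ for all } i\le n\}$ be the available set ($A_0=S^{d-1}$). If $A_n$ has positive $(d-1)$-dimensional surface measure, draw $x_{n+1}$ from the normalized surface measure restricted to $A_n$ (independently of everything else given the past) and continue; otherwise stop. The final set of parked points is the resulting complete parking. *)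

theory Defs
  imports "HOL-Probability.Probability"
begin

text \<open>State of random sequential adsorption: a pair (n, f) where n is the number of
  parked points and f 0, ..., f (n-1) are the parked points (later values irrelevant).\<close>

definition rsa_space :: "(nat \<times> (nat \<Rightarrow> real ^ 'd)) measure" where
  "rsa_space = count_space UNIV \<Otimes>\<^sub>M (\<Pi>\<^sub>M i\<in>UNIV. (borel :: (real ^ 'd) measure))"

definition avail :: "real \<Rightarrow> nat \<times> (nat \<Rightarrow> real ^ 'd) \<Rightarrow> (real ^ 'd) set" where
  "avail r s = {x \<in> sphere 0 1. \<forall>i < fst s. dist x (snd s i) \<ge> r}"

text \<open>Cone over a subset of the sphere; its Lebesgue measure is proportional to the
  (d-1)-dimensional surface measure of the subset (cone measure = normalized surface measure).\<close>
definition cone1 :: "(real ^ 'd) set \<Rightarrow> (real ^ 'd) set" where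
  "cone1 A = {t *\<^sub>R x | t x. 0 < t \<and> t \<le> 1 \<and> x \<in> A}"

definition sphere_pos :: "(real ^ 'd) set \<Rightarrow> bool" where
  "sphere_pos A \<longleftrightarrow> emeasure lborel (cone1 A) > 0"

text \<open>Normalized surface measure on the sphere restricted to A: push forward of the
  uniform measure on the cone under radial projection.\<close>
definition sphere_uniform :: "(real ^ 'd) set \<Rightarrow> (real ^ 'd) measure" where
  "sphere_uniform A = distr (uniform_measure lborel (cone1 A)) borel (\<lambda>y. (1 / norm y) *\<^sub>R y)"

definition rsa_terminal :: "real \<Rightarrow> nat \<times> (nat \<Rightarrow> real ^ 'd) \<Rightarrow> bool" where
  "rsa_terminal r s \<longleftrightarrow> \<not> sphere_pos (avail r s)"

definition rsa_step :: "real \<Rightarrow> nat \<times> (nat \<Rightarrow> real ^ 'd) \<Rightarrow> (nat \<times> (nat \<Rightarrow> real ^ 'd)) measure" where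
  "rsa_step r s = (if rsa_terminal r s then return rsa_space s
     else distr (sphere_uniform (avail r s)) rsa_space (\<lambda>x. (Suc (fst s), (snd s)(fst s := x))))"

fun rsa_law :: "real \<Rightarrow> nat \<Rightarrow> (nat \<times> (nat \<Rightarrow> real ^ 'd)) measure" where
  "rsa_law r 0 = return rsa_space (0, \<lambda>_. 0)"
| "rsa_law r (Suc n) = bind (rsa_law r n) (rsa_step r)"

end

theory Submission
  imports Defs
begin

text \<open>For r = \<open>sqrt 2\<close> two points of the sphere may both be parked iff their inner
  product is non-positive. A family of pairwise non-acute unit vectors leaves a set of positive
  measure available iff it is linearly independent: a linear dependence, split into its positive
  and negative parts, forces both parts to vanish and confines every available point to a
  hyperplane, whereas an independent family admits a direction making an obtuse angle with all of
  its members, around which an open cap remains available. Each new point is uniform on a set of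
  positive measure, so it almost surely avoids the span of the previous ones, a null set while
  fewer than d points are parked. Hence the first d points are independent, and the process stops
  once d + 1 points, necessarily dependent, have been parked.\<close>

section \<open>Euclidean preliminaries\<close>

lemma dist_ge_sqrt2_iff_inner_nonpos:
  fixes x y :: "'a::real_inner"
  assumes "norm x = 1" "norm y = 1"
  shows "sqrt 2 \<le> dist x y \<longleftrightarrow> x \<bullet> y \<le> 0"
proof -
  have "(dist x y)\<^sup>2 = 2 - 2 * (x \<bullet> y)"
    using dot_norm_neg[of x y] assms by (simp add: dist_norm)
  then have "dist x y = sqrt (2 - 2 * (x \<bullet> y))"
    by (metis real_sqrt_unique zero_le_dist)
  then show ?thesis by simp
qed

lemma obtuse_dependent_inner_zero:
  fixes x :: "'i \<Rightarrow> 'a::real_inner"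
  assumes "finite I"
    and obtuse: "\<And>i j. i \<in> I \<Longrightarrow> j \<in> I \<Longrightarrow> i \<noteq> j \<Longrightarrow> x i \<bullet> x j \<le> 0"
    and dep: "(\<Sum>i\<in>I. c i *\<^sub>R x i) = 0" and j: "j \<in> I" "c j \<noteq> 0"
    and y: "\<And>i. i \<in> I \<Longrightarrow> y \<bullet> x i \<le> 0"
  shows "y \<bullet> x j = 0"
proof -
  obtain e where e0: "(\<Sum>i\<in>I. e i *\<^sub>R x i) = 0" and ej: "e j > 0"
  proof (cases "c j > 0")
    case False
    have "(\<Sum>i\<in>I. (- c i) *\<^sub>R x i) = 0" using dep by (simp add: sum_negf)
    with False j show ?thesis using that[of "\<lambda>i. - c i"] by auto
  qed (use dep that in blast)
  define P where "P = {i\<in>I. e i > 0}"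
  define u where "u = (\<Sum>i\<in>P. e i *\<^sub>R x i)"
  have P: "finite P" "P \<subseteq> I" "j \<in> P" using \<open>finite I\<close> j ej by (auto simp: P_def)
  have "(\<Sum>i\<in>I - P. e i *\<^sub>R x i) + u = 0"
    using e0 sum.subset_diff[OF P(2) \<open>finite I\<close>, of "\<lambda>i. e i *\<^sub>R x i"] by (simp add: u_def)
  then have u_neg: "u = (\<Sum>i\<in>I - P. (- e i) *\<^sub>R x i)"
    by (simp add: sum_negf add_eq_0_iff)
  text \<open>The positive and negative parts of the relation have non-positive inner product,
    so both vanish.\<close>
  have "u \<bullet> u = (\<Sum>i\<in>P. e i *\<^sub>R x i) \<bullet> (\<Sum>l\<in>I - P. (- e l) *\<^sub>R x l)"
    using u_neg by (simp add: u_def)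
  also have "\<dots> = (\<Sum>i\<in>P. e i * (x i \<bullet> (\<Sum>l\<in>I - P. (- e l) *\<^sub>R x l)))"
    by (simp add: inner_sum_left)
  also have "\<dots> = (\<Sum>i\<in>P. \<Sum>l\<in>I - P. (e i * - e l) * (x i \<bullet> x l))"
    by (simp add: inner_sum_right sum_distrib_left mult_ac)
  also have "\<dots> \<le> 0"
  proof (intro sum_nonpos)
    fix i l assume "i \<in> P" "l \<in> I - P"
    then have "e i * - e l \<ge> 0" "x i \<bullet> x l \<le> 0"
      using obtuse P(2) by (auto simp: P_def mult_nonneg_nonpos)
    then show "e i * - e l * (x i \<bullet> x l) \<le> 0" by (rule mult_nonneg_nonpos)
  qed
  finally have "u = 0" by (metis antisym inner_ge_zero inner_eq_zero_iff)
  have "(\<Sum>i\<in>P. e i * (y \<bullet> x i)) = y \<bullet> u"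
    by (simp add: u_def inner_sum_right)
  also have "\<dots> = 0" using \<open>u = 0\<close> by simp
  finally have "(\<Sum>i\<in>P. e i * - (y \<bullet> x i)) = 0"
    by (simp add: sum_negf)
  moreover have "\<forall>i\<in>P. 0 \<le> e i * - (y \<bullet> x i)"
    using y P(2) by (auto simp: P_def intro!: mult_nonneg_nonpos)
  ultimately have "e j * - (y \<bullet> x j) = 0"
    using sum_nonneg_eq_0_iff[OF P(1), of "\<lambda>i. e i * - (y \<bullet> x i)"] P(3) by simp
  then show ?thesis using ej by simp
qed

lemma independent_ex_nonzero_inner_neg:
  fixes S :: "'a::euclidean_space set"
  assumes "independent S"
  shows "\<exists>v. v \<noteq> 0 \<and> (\<forall>x\<in>S. v \<bullet> x < 0)"
  using independent_imp_finite[OF assms] assms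
proof (induction S)
  case empty
  obtain b :: 'a where "b \<in> Basis" using nonempty_Basis by blast
  then show ?case by (intro exI[of _ b]) auto
next
  case (insert a S)
  then have "independent S" and a: "a \<notin> span S" by (auto simp: independent_insert)
  then obtain v where v: "\<forall>x\<in>S. v \<bullet> x < 0" using insert.IH by blast
  obtain y z where "y \<in> span S" and z: "\<And>w. w \<in> span S \<Longrightarrow> orthogonal z w" and "a = y + z"
    using orthogonal_subspace_decomp_exists[of S a] by blast
  text \<open>Tilting v against the component of a orthogonal to span S.\<close>
  then have "z \<noteq> 0" and za: "z \<bullet> a = z \<bullet> z" using a by (auto simp: orthogonal_def inner_add_right)
  define w where "w = v - ((\<bar>v \<bullet> a\<bar> + 1) / (z \<bullet> z)) *\<^sub>R z"
  have "w \<bullet> a = v \<bullet> a - (\<bar>v \<bullet> a\<bar> + 1)"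
    using \<open>z \<noteq> 0\<close> by (simp add: w_def inner_diff_left za)
  moreover have "w \<bullet> x = v \<bullet> x" if "x \<in> S" for x
    using z[OF span_base[OF that]] by (simp add: w_def inner_diff_left orthogonal_def)
  ultimately have "\<forall>x\<in>insert a S. w \<bullet> x < 0" using v by auto
  then show ?case by (metis inner_zero_left insertI1 less_irrefl)
qed

lemma null_sets_lborel_if_negligible:
  fixes S :: "'a::euclidean_space set"
  assumes "negligible S" "S \<in> sets borel"
  shows "S \<in> null_sets lborel"
  using assms by (simp add: negligible_iff_null_sets null_sets_completion_iff)

lemma null_sets_lborel_span:
  fixes X :: "'a::euclidean_space set"
  assumes "finite X" "card X < DIM('a)"
  shows "span X \<in> null_sets lborel"
proof (rule null_sets_lborel_if_negligible)
  have "dim (span X) \<le> card X" using dim_le_card[of "span X" X] assms(1) by simp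
  then show "negligible (span X)" using assms(2) by (intro negligible_lowdim) simp
qed (simp add: closed_subspace)

section \<open>Parkings of radius \<open>sqrt 2\<close>\<close>

definition parking :: "real \<Rightarrow> nat \<Rightarrow> (nat \<Rightarrow> 'a::real_normed_vector) \<Rightarrow> bool" where
  "parking r k x \<longleftrightarrow> (\<forall>i<k. norm (x i) = 1) \<and> (\<forall>i<k. \<forall>j<k. i \<noteq> j \<longrightarrow> r \<le> dist (x i) (x j))"

lemma parking_sqrt2_iff:
  fixes x :: "nat \<Rightarrow> 'a::real_inner"
  shows "parking (sqrt 2) k x \<longleftrightarrow> (\<forall>i<k. norm (x i) = 1) \<and> (\<forall>i<k. \<forall>j<k. i \<noteq> j \<longrightarrow> x i \<bullet> x j \<le> 0)"
  by (auto simp: parking_def dist_ge_sqrt2_iff_inner_nonpos)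

lemma inj_on_parking:
  assumes "0 < r" "parking r k x"
  shows "inj_on x {..<k}"
proof (rule inj_onI)
  fix i j assume "i \<in> {..<k}" "j \<in> {..<k}" "x i = x j"
  with assms show "i = j" unfolding parking_def by (metis dist_self lessThan_iff not_le)
qed

lemma parking_extend:
  assumes "parking r k x" "z \<in> avail r (k, x)"
  shows "parking r (Suc k) (x(k := z))"
  unfolding parking_def
proof (intro conjI allI impI)
  fix i assume "i < Suc k"
  then show "norm ((x(k := z)) i) = 1" using assms by (auto simp: parking_def avail_def less_Suc_eq)
next
  fix i j assume "i < Suc k" "j < Suc k" "i \<noteq> j"
  then consider "i < k" "j < k" | "i = k" "j < k" | "j = k" "i < k" by linarith
  then show "r \<le> dist ((x(k := z)) i) ((x(k := z)) j)"
    using assms \<open>i \<noteq> j\<close> by cases (auto simp: parking_def avail_def dist_commute)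
qed

lemma cone1_avail:
  "cone1 (avail r s) = {y. y \<noteq> 0 \<and> norm y \<le> 1 \<and> (\<forall>i<fst s. r \<le> dist (sgn y) (snd s i))}"
proof (intro set_eqI iffI)
  fix y assume "y \<in> cone1 (avail r s)"
  then obtain t x where y: "y = t *\<^sub>R x" "0 < t" "t \<le> 1" and x: "x \<in> avail r s"
    unfolding cone1_def by auto
  then have "norm x = 1" by (simp add: avail_def)
  then have "sgn y = x" using y by (simp add: sgn_scaleR sgn_div_norm)
  then show "y \<in> {y. y \<noteq> 0 \<and> norm y \<le> 1 \<and> (\<forall>i<fst s. r \<le> dist (sgn y) (snd s i))}"
    using y x \<open>norm x = 1\<close> by (auto simp: avail_def)
next
  fix y assume y: "y \<in> {y. y \<noteq> 0 \<and> norm y \<le> 1 \<and> (\<forall>i<fst s. r \<le> dist (sgn y) (snd s i))}"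
  then have "y = norm y *\<^sub>R sgn y" "sgn y \<in> avail r s"
    by (auto simp: avail_def norm_sgn sgn_div_norm)
  then show "y \<in> cone1 (avail r s)" using y unfolding cone1_def
    by (intro CollectI exI[of _ "norm y"] exI[of _ "sgn y"]) auto
qed

lemma sets_cone1_avail [measurable]: "cone1 (avail r s) \<in> sets borel"
  unfolding cone1_avail by measurable

lemma emeasure_cone1_avail_finite: "emeasure lborel (cone1 (avail r s)) \<noteq> \<infinity>"
proof -
  have "cone1 (avail r s) \<subseteq> cball 0 1" by (auto simp: cone1_avail)
  then have "bounded (cone1 (avail r s))" by (rule bounded_subset[OF bounded_cball])
  then show ?thesis using emeasure_bounded_finite by (simp add: less_top)
qed

lemma sgn_mem_avail: "y \<in> cone1 (avail r s) \<Longrightarrow> sgn y \<in> avail r s"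
  by (subst (asm) cone1_avail) (auto simp: avail_def norm_sgn)

lemma mem_cone1_avail_sqrt2:
  assumes "\<forall>i<k. norm (x i) = 1"
  shows "y \<in> cone1 (avail (sqrt 2) (k, x)) \<longleftrightarrow> y \<noteq> 0 \<and> norm y \<le> 1 \<and> (\<forall>i<k. y \<bullet> x i \<le> 0)"
proof -
  have "sqrt 2 \<le> dist (sgn y) (x i) \<longleftrightarrow> y \<bullet> x i \<le> 0" if "y \<noteq> 0" "i < k" for i
    using that assms dist_ge_sqrt2_iff_inner_nonpos[of "sgn y" "x i"]
    by (simp add: norm_sgn sgn_div_norm mult_le_0_iff)
  then show ?thesis by (auto simp: cone1_avail)
qed

lemma rsa_terminal_if_dependent:
  assumes "parking (sqrt 2) k x" "dependent (x ` {..<k})"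
  shows "rsa_terminal (sqrt 2) (k, x)"
proof -
  have unit: "\<forall>i<k. norm (x i) = 1" and obtuse: "\<forall>i<k. \<forall>j<k. i \<noteq> j \<longrightarrow> x i \<bullet> x j \<le> 0"
    using assms(1) by (auto simp: parking_sqrt2_iff)
  have inj: "inj_on x {..<k}" using inj_on_parking[OF _ assms(1)] by simp
  obtain u where "\<exists>v\<in>x ` {..<k}. u v \<noteq> 0" "(\<Sum>v\<in>x ` {..<k}. u v *\<^sub>R v) = 0"
    using assms(2) real_vector.dependent_finite[of "x ` {..<k}"] by auto
  then obtain j where j: "j < k" "u (x j) \<noteq> 0" and dep: "(\<Sum>i<k. u (x i) *\<^sub>R x i) = 0"
    by (auto simp: sum.reindex[OF inj])
  have "cone1 (avail (sqrt 2) (k, x)) \<subseteq> {y. x j \<bullet> y = 0}"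
  proof
    fix y assume "y \<in> cone1 (avail (sqrt 2) (k, x))"
    then have "\<And>i. i \<in> {..<k} \<Longrightarrow> y \<bullet> x i \<le> 0" by (simp add: mem_cone1_avail_sqrt2[OF unit])
    from obtuse_dependent_inner_zero[OF _ _ dep _ _ this] obtuse j
    show "y \<in> {y. x j \<bullet> y = 0}" by (simp add: inner_commute)
  qed
  moreover have "x j \<noteq> 0" using unit j by auto
  then have "{y. x j \<bullet> y = 0} \<in> null_sets lborel"
    using negligible_hyperplane[of "x j" 0]
    by (intro null_sets_lborel_if_negligible) (auto simp: closed_hyperplane)
  ultimately have "cone1 (avail (sqrt 2) (k, x)) \<in> null_sets lborel"
    by (rule null_sets_subset[rotated 2]) simp
  then show ?thesis by (simp add: rsa_terminal_def sphere_pos_def null_setsD1)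
qed

lemma not_rsa_terminal_if_independent:
  fixes x :: "nat \<Rightarrow> real ^ 'd"
  assumes "parking (sqrt 2) k x" "independent (x ` {..<k})"
  shows "\<not> rsa_terminal (sqrt 2) (k, x)"
proof -
  have unit: "\<forall>i<k. norm (x i) = 1" using assms(1) by (simp add: parking_def)
  obtain v where "v \<noteq> 0" and v: "\<forall>i<k. v \<bullet> x i < 0"
    using independent_ex_nonzero_inner_neg[OF assms(2)] by auto
  define U where "U = ball 0 1 \<inter> - {0} \<inter> (\<Inter>i<k. {y. x i \<bullet> y < 0})"
  have "open U" unfolding U_def by (intro open_Int open_INT) (auto intro: open_halfspace_lt)
  moreover have "(1 / (2 * norm v)) *\<^sub>R v \<in> U"
    using \<open>v \<noteq> 0\<close> v by (auto simp: U_def inner_commute divide_neg_pos)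
  ultimately obtain p e where "0 < e" "ball p e \<subseteq> U" by (meson openE)
  moreover have "U \<subseteq> cone1 (avail (sqrt 2) (k, x))"
    by (auto simp: U_def mem_cone1_avail_sqrt2[OF unit] inner_commute less_imp_le)
  ultimately have "emeasure lborel (ball p e) \<le> emeasure lborel (cone1 (avail (sqrt 2) (k, x)))"
    by (intro emeasure_mono) auto
  moreover have "0 < emeasure lborel (ball p e)" using \<open>0 < e\<close> by (simp add: emeasure_ball)
  ultimately show ?thesis by (simp add: rsa_terminal_def sphere_pos_def)
qed

lemma rsa_terminal_iff_dependent:
  fixes x :: "nat \<Rightarrow> real ^ 'd"
  assumes "parking (sqrt 2) k x"
  shows "rsa_terminal (sqrt 2) (k, x) \<longleftrightarrow> dependent (x ` {..<k})"
  using rsa_terminal_if_dependent not_rsa_terminal_if_independent assms by blast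

section \<open>The transition kernel\<close>

type_synonym 'd rsa_state = "nat \<times> (nat \<Rightarrow> real ^ 'd)"

lemma space_rsa_space [simp]: "space rsa_space = UNIV"
  by (auto simp: rsa_space_def space_pair_measure space_PiM)

lemma measurable_fst_rsa_space [measurable]: "fst \<in> rsa_space \<rightarrow>\<^sub>M count_space UNIV"
  unfolding rsa_space_def by simp

lemma measurable_rsa_space_point [measurable]: "(\<lambda>s. snd s i) \<in> rsa_space \<rightarrow>\<^sub>M borel"
  unfolding rsa_space_def by measurable

definition rsa_park :: "nat \<times> (nat \<Rightarrow> 'a) \<Rightarrow> 'a \<Rightarrow> nat \<times> (nat \<Rightarrow> 'a)" where
  "rsa_park s z = (Suc (fst s), (snd s)(fst s := z))"

lemma measurable_rsa_park [measurable (raw)]: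
  assumes "f \<in> M \<rightarrow>\<^sub>M rsa_space" "g \<in> M \<rightarrow>\<^sub>M (borel :: (real ^ 'd) measure)"
  shows "(\<lambda>x. rsa_park (f x) (g x)) \<in> M \<rightarrow>\<^sub>M rsa_space"
proof -
  have upd: "(\<lambda>p i. if i = fst (fst p) then snd p else snd (fst p) i)
      \<in> rsa_space \<Otimes>\<^sub>M (borel :: (real ^ 'd) measure) \<rightarrow>\<^sub>M (\<Pi>\<^sub>M i\<in>UNIV. borel)"
    by (rule measurable_PiM_single') (auto simp: rsa_space_def)
  then have "(\<lambda>p. (Suc (fst (fst p)), \<lambda>i. if i = fst (fst p) then snd p else snd (fst p) i))
      \<in> rsa_space \<Otimes>\<^sub>M (borel :: (real ^ 'd) measure) \<rightarrow>\<^sub>M count_space UNIV \<Otimes>\<^sub>M (\<Pi>\<^sub>M i\<in>UNIV. borel)"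
    by (intro measurable_Pair upd) simp
  then have "(\<lambda>p. rsa_park (fst p) (snd p))
      \<in> rsa_space \<Otimes>\<^sub>M (borel :: (real ^ 'd) measure) \<rightarrow>\<^sub>M rsa_space"
    unfolding rsa_park_def fun_upd_def rsa_space_def[symmetric] .
  from measurable_compose[OF measurable_Pair[OF assms] this] show ?thesis by simp
qed

lemma measurable_rsa_park_point [measurable]: "rsa_park s \<in> borel \<rightarrow>\<^sub>M rsa_space"
  using measurable_rsa_park[OF measurable_const measurable_ident] by simp

definition rsa_cones :: "real \<Rightarrow> ('d::finite rsa_state \<times> (real ^ 'd)) set" where
  "rsa_cones r = {(s, y). y \<in> cone1 (avail r s)}"

lemma vimage_Pair_rsa_cones [simp]: "Pair s -` rsa_cones r = cone1 (avail r s)"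
  by (simp add: rsa_cones_def)

lemma sets_rsa_cones [measurable]: "rsa_cones r \<in> sets (rsa_space \<Otimes>\<^sub>M lborel)"
proof -
  have "{p \<in> space (rsa_space \<Otimes>\<^sub>M lborel). snd p \<noteq> 0 \<and> norm (snd p) \<le> 1 \<and>
      (\<forall>i<fst (fst p). r \<le> dist (sgn (snd p)) (snd (fst p) i))} \<in> sets (rsa_space \<Otimes>\<^sub>M lborel)"
    by measurable
  then show ?thesis
    by (simp add: rsa_cones_def cone1_avail space_pair_measure split_beta' Collect_conj_eq)
qed

lemma pred_rsa_terminal [measurable]: "Measurable.pred rsa_space (rsa_terminal r)"
proof -
  have [measurable]: "(\<lambda>s. emeasure lborel (cone1 (avail r s))) \<in> borel_measurable rsa_space"
    using lborel.measurable_emeasure_Pair[OF sets_rsa_cones[of r]] by simp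
  show ?thesis unfolding rsa_terminal_def sphere_pos_def by measurable
qed

lemma sphere_uniform_eq_distr_sgn:
  fixes A :: "(real ^ 'd) set"
  shows "sphere_uniform A = distr (uniform_measure lborel (cone1 A)) borel sgn"
proof -
  have "(\<lambda>y. (1 / norm y) *\<^sub>R y) = (sgn :: real ^ 'd \<Rightarrow> _)"
    by (simp add: fun_eq_iff sgn_div_norm divide_inverse_commute)
  then show ?thesis by (simp add: sphere_uniform_def)
qed

lemma sets_sphere_uniform [simp, measurable_cong]: "sets (sphere_uniform A) = sets borel"
  by (simp add: sphere_uniform_def)

lemma rsa_step_nonterminal:
  "\<not> rsa_terminal r s \<Longrightarrow> rsa_step r s = distr (sphere_uniform (avail r s)) rsa_space (rsa_park s)"
  by (simp add: rsa_step_def rsa_park_def[abs_def])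

lemma rsa_step_terminal: "rsa_terminal r s \<Longrightarrow> rsa_step r s = return rsa_space s"
  by (simp add: rsa_step_def)

lemma prob_space_sphere_uniform_avail:
  assumes "\<not> rsa_terminal r s"
  shows "prob_space (sphere_uniform (avail r s))"
  unfolding sphere_uniform_eq_distr_sgn
proof (rule prob_space.prob_space_distr)
  show "prob_space (uniform_measure lborel (cone1 (avail r s)))"
    using assms emeasure_cone1_avail_finite[of r s]
    by (intro prob_space_uniform_measure) (auto simp: rsa_terminal_def sphere_pos_def)
qed simp

lemma emeasure_rsa_step_nonterminal:
  assumes "\<not> rsa_terminal r s" "A \<in> sets rsa_space"
  shows "emeasure (rsa_step r s) A =
    emeasure lborel (cone1 (avail r s) \<inter> (\<lambda>y. rsa_park s (sgn y)) -` A) /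
      emeasure lborel (cone1 (avail r s))"
proof -
  let ?U = "uniform_measure lborel (cone1 (avail r s))"
  have sgn: "sgn \<in> ?U \<rightarrow>\<^sub>M borel" by (simp add: measurable_cong_sets[OF sets_uniform_measure refl])
  have park: "rsa_park s \<in> distr ?U borel sgn \<rightarrow>\<^sub>M rsa_space"
    by (simp add: measurable_cong_sets[OF sets_distr refl])
  have "rsa_park s -` A \<in> sets borel"
    using measurable_sets[OF measurable_rsa_park_point assms(2)] by simp
  then have "emeasure (rsa_step r s) A = emeasure ?U (sgn -` rsa_park s -` A)"
    using assms by (simp add: rsa_step_nonterminal sphere_uniform_eq_distr_sgn
        emeasure_distr[OF park] emeasure_distr[OF sgn])
  also have "\<dots> = emeasure lborel (cone1 (avail r s) \<inter> (\<lambda>y. rsa_park s (sgn y)) -` A) /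
      emeasure lborel (cone1 (avail r s))"
    using measurable_sets[OF borel_measurable_sgn \<open>rsa_park s -` A \<in> sets borel\<close>]
    by (simp add: emeasure_uniform_measure vimage_comp Int_commute comp_def)
  finally show ?thesis .
qed

lemma prob_space_rsa_step: "prob_space (rsa_step r s)"
  by (cases "rsa_terminal r s")
    (simp_all add: rsa_step_terminal prob_space_return prob_space_sphere_uniform_avail
      rsa_step_nonterminal prob_space.prob_space_distr)

lemma sets_rsa_step: "sets (rsa_step r s) = sets rsa_space"
  by (cases "rsa_terminal r s") (simp_all add: rsa_step_terminal rsa_step_nonterminal)

text \<open>Off the terminal states the kernel is a ratio of Lebesgue measures of sections of
  measurable subsets of the product space.\<close>
lemma measurable_emeasure_rsa_step:
  assumes "A \<in> sets rsa_space"
  shows "(\<lambda>s. emeasure (rsa_step r s) A) \<in> borel_measurable rsa_space"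
proof -
  let ?Q = "rsa_cones r \<inter> (\<lambda>p. rsa_park (fst p) (sgn (snd p))) -` A"
  note [measurable] = assms
  have "?Q = {p \<in> space (rsa_space \<Otimes>\<^sub>M lborel).
      p \<in> rsa_cones r \<and> rsa_park (fst p) (sgn (snd p)) \<in> A}"
    by (auto simp: space_pair_measure)
  also have "\<dots> \<in> sets (rsa_space \<Otimes>\<^sub>M lborel)" by measurable
  finally
  have [measurable]: "(\<lambda>s. emeasure lborel (Pair s -` ?Q)) \<in> borel_measurable rsa_space"
    by (rule lborel.measurable_emeasure_Pair)
  have [measurable]: "(\<lambda>s. emeasure lborel (cone1 (avail r s))) \<in> borel_measurable rsa_space"
    using lborel.measurable_emeasure_Pair[OF sets_rsa_cones[of r]] by simp
  have "emeasure (rsa_step r s) A = (if rsa_terminal r s then indicator A s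
      else emeasure lborel (Pair s -` ?Q) / emeasure lborel (cone1 (avail r s)))" for s
    using assms by (auto simp: rsa_step_terminal emeasure_rsa_step_nonterminal rsa_cones_def
        vimage_def Collect_conj_eq)
  then show ?thesis by simp
qed

lemma measurable_rsa_step: "rsa_step r \<in> rsa_space \<rightarrow>\<^sub>M prob_algebra rsa_space"
  by (intro measurable_prob_algebraI measurable_subprob_algebra prob_space_rsa_step sets_rsa_step
      measurable_emeasure_rsa_step prob_space_imp_subprob_space)

lemma AE_sphere_uniform:
  fixes A :: "(real ^ 'd) set"
  assumes [measurable]: "Measurable.pred borel P" "cone1 A \<in> sets borel"
    and "N \<in> null_sets lborel" "\<And>y. y \<in> cone1 A \<Longrightarrow> y \<notin> N \<Longrightarrow> P (sgn y)"
  shows "AE x in sphere_uniform A. P x"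
  unfolding sphere_uniform_eq_distr_sgn
proof (subst AE_distr_iff)
  have "AE y in lborel. y \<in> cone1 A \<longrightarrow> P (sgn y)"
    using AE_not_in[OF assms(3)] by eventually_elim (use assms(4) in blast)
  then show "AE y in uniform_measure lborel (cone1 A). P (sgn y)"
    by (rule AE_uniform_measureI[rotated]) simp
qed (simp_all add: measurable_cong_sets[OF sets_uniform_measure refl])

lemma rsa_law_in_prob_algebra: "rsa_law r n \<in> space (prob_algebra rsa_space)"
proof (induction n)
  case 0
  show ?case by (simp add: space_prob_algebra prob_space_return)
next
  case (Suc n)
  show ?case
    using prob_space_bind'[OF Suc.IH measurable_rsa_step] sets_bind'[OF Suc.IH measurable_rsa_step]
    by (simp add: space_prob_algebra)
qed

lemma prob_space_rsa_law: "prob_space (rsa_law r n)"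
  using rsa_law_in_prob_algebra unfolding space_prob_algebra by blast

lemma sets_rsa_law [measurable_cong]: "sets (rsa_law r n) = sets rsa_space"
  using rsa_law_in_prob_algebra unfolding space_prob_algebra by blast

section \<open>Typical states of the process\<close>

text \<open>The states reached after k steps, almost surely, for k up to d + 1.\<close>
definition rsa_typical :: "nat \<Rightarrow> 'd::finite rsa_state \<Rightarrow> bool" where
  "rsa_typical k s \<longleftrightarrow>
    fst s = k \<and> parking (sqrt 2) k (snd s) \<and> (rsa_terminal (sqrt 2) s \<longleftrightarrow> CARD('d) < k)"

lemma pred_rsa_typical [measurable]: "Measurable.pred rsa_space (rsa_typical k)"
  unfolding rsa_typical_def parking_def by measurable

lemma rsa_typical_rsa_park:
  fixes s :: "'d::finite rsa_state"
  assumes "rsa_typical k s" "k \<le> CARD('d)" "z \<in> avail (sqrt 2) s"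
    and "k < CARD('d) \<Longrightarrow> z \<notin> span (snd s ` {..<k})"
  shows "rsa_typical (Suc k) (rsa_park s z)"
proof -
  obtain x where s: "s = (k, x)" using assms(1) by (cases s) (simp add: rsa_typical_def)
  have park: "parking (sqrt 2) k x" and "\<not> rsa_terminal (sqrt 2) (k, x)"
    using assms(1,2) by (auto simp: rsa_typical_def s)
  then have indep: "independent (x ` {..<k})" by (simp add: rsa_terminal_iff_dependent)
  have park': "parking (sqrt 2) (Suc k) (x(k := z))"
    using parking_extend park assms(3) by (simp add: s)
  have img: "(x(k := z)) ` {..<Suc k} = insert z (x ` {..<k})" by (auto simp: lessThan_Suc)
  have "rsa_terminal (sqrt 2) (Suc k, x(k := z)) \<longleftrightarrow> CARD('d) < Suc k"
  proof (cases "k < CARD('d)")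
    case True
    then have "independent (insert z (x ` {..<k}))"
      using assms(4) indep by (intro independent_insertI) (simp_all add: s)
    then show ?thesis using True rsa_terminal_iff_dependent[OF park'] img by simp
  next
    case False
    have "card ((x(k := z)) ` {..<Suc k}) = Suc CARD('d)"
      using card_image[OF inj_on_parking[OF _ park']] False assms(2) by simp
    then have "dependent ((x(k := z)) ` {..<Suc k})" using independent_bound by fastforce
    then show ?thesis using False assms(2) rsa_terminal_iff_dependent[OF park'] by simp
  qed
  then show ?thesis using park' by (simp add: rsa_typical_def rsa_park_def s)
qed

lemma AE_rsa_step_typical:
  fixes s :: "'d::finite rsa_state"
  assumes "rsa_typical k s" "k \<le> Suc CARD('d)"
  shows "AE t in rsa_step (sqrt 2) s. rsa_typical (min (Suc k) (Suc CARD('d))) t"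
proof (cases "k \<le> CARD('d)")
  case False
  then have "k = Suc CARD('d)" "rsa_terminal (sqrt 2) s" using assms by (auto simp: rsa_typical_def)
  then show ?thesis using assms(1) unfolding rsa_step_terminal[OF \<open>rsa_terminal (sqrt 2) s\<close>]
    by (simp add: AE_return)
next
  case True
  then have nt: "\<not> rsa_terminal (sqrt 2) s" using assms(1) by (simp add: rsa_typical_def)
  text \<open>A new point almost surely avoids the span of the previous ones, a null set while k < d.\<close>
  define N where "N = (if k < CARD('d) then span (snd s ` {..<k}) else {})"
  have "N \<in> null_sets lborel"
    using card_image_le[of "{..<k}" "snd s"] by (auto simp: N_def intro!: null_sets_lborel_span)
  then have AE: "AE z in sphere_uniform (avail (sqrt 2) s). rsa_typical (Suc k) (rsa_park s z)"
  proof (rule AE_sphere_uniform[rotated 2])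
    fix y assume y: "y \<in> cone1 (avail (sqrt 2) s)" "y \<notin> N"
    then have "y \<noteq> 0" using cone1_avail by blast
    have "sgn y \<notin> span (snd s ` {..<k})" if "k < CARD('d)"
    proof
      assume "sgn y \<in> span (snd s ` {..<k})"
      then have "norm y *\<^sub>R sgn y \<in> N" using that by (simp add: N_def span_scale)
      then show False using y \<open>y \<noteq> 0\<close> by (simp add: sgn_div_norm)
    qed
    then show "rsa_typical (Suc k) (rsa_park s (sgn y))"
      using rsa_typical_rsa_park[OF assms(1) True sgn_mem_avail[OF y(1)]] by blast
  qed measurable
  have park: "rsa_park s \<in> sphere_uniform (avail (sqrt 2) s) \<rightarrow>\<^sub>M rsa_space" by measurable
  have typical: "{t \<in> space rsa_space. rsa_typical (Suc k) t} \<in> sets rsa_space" by measurable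
  have min: "min (Suc k) (Suc CARD('d)) = Suc k" using True by simp
  show ?thesis unfolding min rsa_step_nonterminal[OF nt] AE_distr_iff[OF park typical] by (rule AE)
qed

lemma AE_rsa_law_typical:
  "AE s in rsa_law (sqrt 2) n. rsa_typical (min n (Suc CARD('d))) (s :: 'd::finite rsa_state)"
proof (induction n)
  case 0
  have "rsa_typical 0 (0, \<lambda>_. 0 :: real ^ 'd)"
    using not_rsa_terminal_if_independent[of 0 "\<lambda>_. 0"]
    by (simp add: rsa_typical_def parking_def real_vector.independent_empty)
  moreover have "{s \<in> space rsa_space. rsa_typical 0 s} \<in> sets rsa_space" by measurable
  ultimately show ?case unfolding rsa_law.simps by (simp add: AE_return)
next
  case (Suc n)
  let ?M = "rsa_law (sqrt 2) n :: 'd::finite rsa_state measure"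
  have K: "rsa_step (sqrt 2) \<in> ?M \<rightarrow>\<^sub>M subprob_algebra rsa_space"
    using measurable_prob_algebraD[OF measurable_rsa_step]
    by (simp add: measurable_cong_sets[OF sets_rsa_law])
  from Suc.IH
  have step: "AE s in ?M. AE t in rsa_step (sqrt 2) s. rsa_typical (min (Suc n) (Suc CARD('d))) t"
  proof eventually_elim
    case (elim s)
    have "min (Suc (min n (Suc CARD('d)))) (Suc CARD('d)) = min (Suc n) (Suc CARD('d))"
      by (simp add: min_def)
    with AE_rsa_step_typical[OF elim min.cobounded2] show ?case by simp
  qed
  show ?case unfolding rsa_law.simps by (subst AE_bind[OF K]) (measurable, rule step)
qed

lemma measure_rsa_terminal_eq_1:
  assumes "Suc CARD('d) \<le> n"
  shows "measure (rsa_law (sqrt 2) n)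
    {s \<in> space rsa_space. rsa_terminal (sqrt 2) (s :: 'd::finite rsa_state)} = 1"
proof -
  have "AE s in rsa_law (sqrt 2) n. rsa_terminal (sqrt 2) (s :: 'd::finite rsa_state)"
    using AE_rsa_law_typical[of n, where 'd = 'd]
    by (rule eventually_mono) (use assms in \<open>simp add: rsa_typical_def\<close>)
  moreover have "{s \<in> space (rsa_law (sqrt 2) n). rsa_terminal (sqrt 2) (s :: 'd::finite rsa_state)}
      \<in> sets (rsa_law (sqrt 2) n)"
    by measurable
  ultimately
  have "\<P>(s in rsa_law (sqrt 2) n. rsa_terminal (sqrt 2) (s :: 'd::finite rsa_state)) = 1"
    by (simp add: prob_space.prob_Collect_eq_1[OF prob_space_rsa_law])
  then show ?thesis by (simp add: sets_eq_imp_space_eq[OF sets_rsa_law])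
qed

lemma AE_rsa_terminal_imp_card:
  "AE s in rsa_law (sqrt 2) n.
    rsa_terminal (sqrt 2) (s :: 'd::finite rsa_state) \<longrightarrow> fst s = CARD('d) + 1"
  using AE_rsa_law_typical[of n, where 'd = 'd]
  by (rule eventually_mono) (auto simp: rsa_typical_def min_def split: if_splits)

theorem theorem1:
  assumes "CARD('d) \<ge> 2"
  shows "(\<lambda>n. measure (rsa_law (sqrt 2) n) {s \<in> space rsa_space. rsa_terminal (sqrt 2) (s :: nat \<times> (nat \<Rightarrow> real ^ 'd))})
           \<longlonglongrightarrow> 1
         \<and> (\<forall>n. AE s in rsa_law (sqrt 2) n. rsa_terminal (sqrt 2) (s :: nat \<times> (nat \<Rightarrow> real ^ 'd)) \<longrightarrow> fst s = CARD('d) + 1)"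
  by (intro conjI allI tendsto_eventually eventually_sequentiallyI measure_rsa_terminal_eq_1
      AE_rsa_terminal_imp_card)

end
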